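(* The class $\mathcal K_\omega^*$ has the expansion property relative to the class $\mathcal K_\omega$.
   Context: Expansion property: let $L\subseteq L^*$ be relational languages, $\mathcal K$ a class of finite $L$-structures and $\mathcal K^*$ a class of finite $L^*$-structures whose $L$-reducts lie in $\mathcal K$. $\mathcal K^*$ has the expansion property relative to $\mathcal K$ if for every $\mathbf A\in\mathcal K$ there is $\mathbf B\in\mathcal K$ such that for all $\mathbf A^*,\mathbf B^*\in\mathcal K^*$ whose $L$-reducts are $\mathbf A$ and $\mathbf B$ respectively, $\mathbf A^*$ embeds into $\mathbf B^*$. A directed graph $(A,E)$ ($E$ irreflexive and asymmetric) is complete multipartite if the relation "$u=v$, or neither $E(u,v)$ nor $E(v,u)$" is an equivalence relation on $A$; its classes are called the parts. $\mathcal K_\omega$ is the class of all finite complete multipartite directed graphs (any finite number of parts), i.e. the age of the generic complete $\omega$-partite directed graph $\omega*I_\omega$. $\mathcal K_\omega^*$ is the class of finite structures $(A,E,<)$ where $(A,E)\in\mathcal K_\omega$ and $<$ is a linear order on $A$ for which every part is an interval. *)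

theory Defs
  imports Main
begin

definition digraph :: "'a set \<Rightarrow> ('a \<times> 'a) set \<Rightarrow> bool" where
  "digraph V E \<longleftrightarrow> finite V \<and> E \<subseteq> V \<times> V
     \<and> (\<forall>u. (u, u) \<notin> E) \<and> (\<forall>u v. (u, v) \<in> E \<longrightarrow> (v, u) \<notin> E)"

definition same_part :: "'a set \<Rightarrow> ('a \<times> 'a) set \<Rightarrow> ('a \<times> 'a) set" where
  "same_part V E = {(u, v). u \<in> V \<and> v \<in> V \<and> (u = v \<or> ((u, v) \<notin> E \<and> (v, u) \<notin> E))}"

text \<open>The class K_omega: finite complete multipartite directed graphs.\<close>
definition K_omega :: "'a set \<Rightarrow> ('a \<times> 'a) set \<Rightarrow> bool" where
  "K_omega V E \<longleftrightarrow> digraph V E \<and> equiv V (same_part V E)"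

definition strict_linear_order_on :: "'a set \<Rightarrow> ('a \<times> 'a) set \<Rightarrow> bool" where
  "strict_linear_order_on V R \<longleftrightarrow> R \<subseteq> V \<times> V \<and> (\<forall>u. (u, u) \<notin> R) \<and> trans R
     \<and> (\<forall>u\<in>V. \<forall>v\<in>V. u \<noteq> v \<longrightarrow> (u, v) \<in> R \<or> (v, u) \<in> R)"

text \<open>The class K_omega^*: expansions by a linear order in which every part is an interval.\<close>
definition K_omega_star :: "'a set \<Rightarrow> ('a \<times> 'a) set \<Rightarrow> ('a \<times> 'a) set \<Rightarrow> bool" where
  "K_omega_star V E R \<longleftrightarrow> K_omega V E \<and> strict_linear_order_on V R
     \<and> (\<forall>P \<in> V // same_part V E. \<forall>u\<in>P. \<forall>w\<in>P. \<forall>v\<in>V.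
           (u, v) \<in> R \<and> (v, w) \<in> R \<longrightarrow> v \<in> P)"

definition embedding ::
  "('a \<Rightarrow> 'b) \<Rightarrow> 'a set \<Rightarrow> ('a \<times> 'a) set \<Rightarrow> ('a \<times> 'a) set
     \<Rightarrow> 'b set \<Rightarrow> ('b \<times> 'b) set \<Rightarrow> ('b \<times> 'b) set \<Rightarrow> bool" where
  "embedding f V E R V' E' R' \<longleftrightarrow> inj_on f V \<and> f ` V \<subseteq> V'
     \<and> (\<forall>u\<in>V. \<forall>v\<in>V. (u, v) \<in> E \<longleftrightarrow> (f u, f v) \<in> E')
     \<and> (\<forall>u\<in>V. \<forall>v\<in>V. (u, v) \<in> R \<longleftrightarrow> (f u, f v) \<in> R')"

text \<open>Expansion property of K^* (structures (V,E,R)) relative to K (structures (V,E));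
  the L-reduct of (V,E,R) is (V,E).\<close>
definition expansion_property ::
  "('a set \<Rightarrow> ('a \<times> 'a) set \<Rightarrow> bool)
     \<Rightarrow> ('a set \<Rightarrow> ('a \<times> 'a) set \<Rightarrow> ('a \<times> 'a) set \<Rightarrow> bool) \<Rightarrow> bool" where
  "expansion_property K Kstar \<longleftrightarrow>
     (\<forall>A EA. K A EA \<longrightarrow> (\<exists>B EB. K B EB \<and>
        (\<forall>RA RB. Kstar A EA RA \<and> Kstar B EB RB \<longrightarrow>
           (\<exists>f. embedding f A EA RA B EB RB))))"

end

theory Submission
  imports Defs "HOL-Library.Ramsey" "HOL-Library.Countable"
begin

text \<open>
  Let \<open>A\<close> have \<open>n\<close> vertices in \<open>k\<close> parts. The graph \<open>B\<close> has \<open>k\<close> parts; a vertex of \<open>B\<close> is a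
  column \<open>c < k\<close>, a label \<open>w \<in> A\<close> and a code word in \<open>{..<N}\<^bsup>2n\<^esup>\<close>, two coordinates per
  vertex of \<open>A\<close>. Two vertices in different columns whose labels lie in different parts of \<open>A\<close>
  compare their code words: vertex \<open>l\<close> is selected when the first word is larger in the first
  coordinate of \<open>l\<close> and smaller in the second. If this selects exactly one vertex \<open>d\<close> in the part
  of the first label and one vertex \<open>d'\<close> in the part of the second, the edge is copied from
  \<open>(d, d')\<close>; otherwise it is oriented by the columns.

  Given convex orders of \<open>A\<close> and \<open>B\<close>, the parts of \<open>A\<close> go to the columns of the same rank, so
  the order between parts is respected. Colour a \<open>4n\<close>-set \<open>U\<close> by the labels \<open>w\<close> for which
  the even-indexed half of \<open>U\<close> gives a smaller vertex of \<open>B\<close> than the odd-indexed half, and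
  take a large homogeneous set with colour \<open>D\<close> (Ramsey). Sort each part of \<open>A\<close> increasingly
  (labels in \<open>D\<close>) or decreasingly (labels outside \<open>D\<close>) and let the code word of \<open>u\<close> consist of
  elements of the homogeneous set placed according to that rank: two vertices of one part then
  interleave, so their order in \<open>B\<close> is dictated by \<open>D\<close> and agrees with \<open>A\<close>; and two vertices of
  different parts select precisely each other, so the edge between them is copied correctly.
\<close>

section \<open>Ranks in finite strict linear orders\<close>

definition order_rank :: "'a set \<Rightarrow> ('a \<times> 'a) set \<Rightarrow> 'a \<Rightarrow> nat" where
  "order_rank X R x = card {y \<in> X. (y, x) \<in> R}"

locale finite_strict_order =
  fixes X :: "'a set" and R :: "('a \<times> 'a) set"
  assumes finite: "finite X" and trans: "trans R" and irrefl: "\<And>x. x \<in> X \<Longrightarrow> (x, x) \<notin> R"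
    and total: "\<And>x y. x \<in> X \<Longrightarrow> y \<in> X \<Longrightarrow> x \<noteq> y \<Longrightarrow> (x, y) \<in> R \<or> (y, x) \<in> R"
begin

lemma order_rank_less:
  assumes "x \<in> X" "y \<in> X" "(x, y) \<in> R"
  shows "order_rank X R x < order_rank X R y"
proof -
  have "{z \<in> X. (z, x) \<in> R} \<subset> {z \<in> X. (z, y) \<in> R}"
    using assms trans irrefl unfolding trans_def by blast
  then show ?thesis unfolding order_rank_def using finite by (simp add: psubset_card_mono)
qed

lemma order_rank_less_iff:
  assumes "x \<in> X" "y \<in> X"
  shows "(x, y) \<in> R \<longleftrightarrow> order_rank X R x < order_rank X R y"
  using order_rank_less[of x y] order_rank_less[of y x] assms total[of x y] by fastforce

lemma inj_on_order_rank: "inj_on (order_rank X R) X"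
  by (rule inj_onI) (metis order_rank_less_iff less_irrefl total)

lemma order_rank_less_card:
  assumes "x \<in> X"
  shows "order_rank X R x < card X"
proof -
  have "{y \<in> X. (y, x) \<in> R} \<subseteq> X - {x}" using irrefl by auto
  then have "order_rank X R x \<le> card (X - {x})"
    unfolding order_rank_def using finite by (simp add: card_mono)
  also have "\<dots> < card X" by (rule card_Diff1_less[OF finite assms])
  finally show ?thesis .
qed

lemma order_rank_image: "order_rank X R ` X = {..<card X}"
proof -
  have "order_rank X R ` X \<subseteq> {..<card X}" using order_rank_less_card by auto
  moreover have "card (order_rank X R ` X) = card {..<card X}"
    using card_image[OF inj_on_order_rank] by simp
  ultimately show ?thesis by (simp add: card_subset_eq)
qed

end

lemma finite_strict_order_subset:
  assumes "strict_linear_order_on V R" "X \<subseteq> V" "finite X"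
  shows "finite_strict_order X R"
  using assms unfolding strict_linear_order_on_def finite_strict_order_def by blast

lemma finite_strict_order_converse:
  assumes "strict_linear_order_on V R" "finite V"
  shows "finite_strict_order V (R\<inverse>)"
  using assms unfolding strict_linear_order_on_def finite_strict_order_def trans_def by blast

lemma finite_strict_order_less:
  fixes X :: "'a :: linorder set"
  assumes "finite X"
  shows "finite_strict_order X {(x, y). x < y}"
  using assms unfolding finite_strict_order_def trans_def by auto

lemma strict_linear_order_on_asym:
  "strict_linear_order_on V R \<Longrightarrow> (x, y) \<in> R \<Longrightarrow> (y, x) \<notin> R"
  unfolding strict_linear_order_on_def trans_def by blast

lemma mult_add_less_mult_add_iff:
  fixes q1 q2 r1 r2 G :: nat
  assumes "r1 < G" "r2 < G"
  shows "q1 * G + r1 < q2 * G + r2 \<longleftrightarrow> q1 < q2 \<or> (q1 = q2 \<and> r1 < r2)"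
proof (cases q1 q2 rule: linorder_cases)
  case less
  then have "q1 * G + r1 < (q1 + 1) * G" using assms by simp
  also have "\<dots> \<le> q2 * G" using less by (intro mult_le_mono1) simp
  finally show ?thesis using less by simp
next
  case greater
  then have "q2 * G + r2 < (q2 + 1) * G" using assms by simp
  also have "\<dots> \<le> q1 * G" using greater by (intro mult_le_mono1) simp
  finally show ?thesis using greater by simp
qed simp

lemma sorted_list_of_set_image_strict_mono:
  fixes g :: "nat \<Rightarrow> nat"
  assumes "\<And>i j. i < j \<Longrightarrow> j < m \<Longrightarrow> g i < g j"
  shows "sorted_list_of_set (g ` {..<m}) = map g [0..<m]"
proof (rule sorted_distinct_set_unique)
  have "sorted_wrt (<) (map g [0..<m])"
    unfolding sorted_wrt_map by (rule sorted_wrt_mono_rel[of _ "(<)"]) (auto intro: assms)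
  then show "sorted (map g [0..<m])" "distinct (map g [0..<m])" by (auto simp: strict_sorted_iff)
qed (auto simp: atLeast0LessThan)

section \<open>Complete multipartite digraphs and convex orders\<close>

lemma K_omega_empty: "K_omega {} {}"
  unfolding K_omega_def digraph_def same_part_def equiv_def refl_on_def sym_def trans_def by simp

lemma same_part_in_carrier: "(u, v) \<in> same_part V E \<Longrightarrow> u \<in> V \<and> v \<in> V"
  unfolding same_part_def by auto

lemma K_omega_no_edge_in_part:
  assumes "K_omega V E" "(u, v) \<in> same_part V E"
  shows "(u, v) \<notin> E"
  using assms unfolding K_omega_def digraph_def same_part_def by auto

lemma edge_between_parts:
  assumes "u \<in> V" "v \<in> V" "(u, v) \<notin> same_part V E"
  shows "(u, v) \<in> E \<or> (v, u) \<in> E"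
  using assms unfolding same_part_def by auto

lemma K_omega_star_order_between_parts:
  assumes K: "K_omega_star V E R"
    and xx: "(x, x') \<in> same_part V E" and yy: "(y, y') \<in> same_part V E"
    and xy: "(x, y) \<notin> same_part V E" and r: "(x, y) \<in> R"
  shows "(x', y') \<in> R"
proof -
  let ?S = "same_part V E"
  have eq: "equiv V ?S" using K unfolding K_omega_star_def K_omega_def by simp
  have tot: "\<forall>u\<in>V. \<forall>v\<in>V. u \<noteq> v \<longrightarrow> (u, v) \<in> R \<or> (v, u) \<in> R"
    using K unfolding K_omega_star_def strict_linear_order_on_def by (elim conjE)
  have convex: "\<forall>P \<in> V // ?S. \<forall>u\<in>P. \<forall>w\<in>P. \<forall>v\<in>V. (u, v) \<in> R \<and> (v, w) \<in> R \<longrightarrow> v \<in> P"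
    using K unfolding K_omega_star_def by (elim conjE)
  have V: "x \<in> V" "x' \<in> V" "y \<in> V" "y' \<in> V"
    using same_part_in_carrier[OF xx] same_part_in_carrier[OF yy] by auto
  have P: "?S `` {x} \<in> V // ?S" and Q: "?S `` {y} \<in> V // ?S" using V by (auto intro: quotientI)
  have inP: "x \<in> ?S `` {x}" "x' \<in> ?S `` {x}" using xx equiv_class_self[OF eq V(1)] by simp_all
  have inQ: "y \<in> ?S `` {y}" "y' \<in> ?S `` {y}" using yy equiv_class_self[OF eq V(3)] by simp_all
  have symS: "sym ?S" and transS: "trans ?S" using eq by (simp_all add: equiv_def)
  have notQ: "x \<notin> ?S `` {y}" using xy symS by (auto dest: symD)
  have notP: "y' \<notin> ?S `` {x}"
  proof
    assume "y' \<in> ?S `` {x}"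
    moreover have "(y', y) \<in> ?S" using yy symS by (auto dest: symD)
    ultimately have "(x, y) \<in> ?S" using transS by (auto dest: transD)
    then show False using xy by simp
  qed
  have "x' \<noteq> y'" "x \<noteq> y'" using notP inP by auto
  show ?thesis
  proof (rule ccontr)
    assume "(x', y') \<notin> R"
    then have "(y', x') \<in> R" using tot \<open>x' \<noteq> y'\<close> V by blast
    moreover have "(y', x) \<in> R \<or> (x, y') \<in> R" using tot \<open>x \<noteq> y'\<close> V by blast
    ultimately show False
      using bspec[OF convex Q] bspec[OF convex P] inP inQ V r notP notQ by blast
  qed
qed

section \<open>The universal multipartite graph\<close>

text \<open>
  Vertices of \<open>B\<close> are triples (column, label, code word); since \<open>B\<close> must be a set of naturals,
  they are coded by \<open>to_nat\<close>.
\<close>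
type_synonym code_vertex = "nat \<times> nat \<times> nat list"

locale multipartite_code =
  fixes A :: "nat set" and EA :: "(nat \<times> nat) set" and N :: nat
  assumes K_omega_A: "K_omega A EA"
begin

abbreviation "SA \<equiv> same_part A EA"
definition "n = card A"
definition "part u = SA `` {u}"
definition "part_rep u = Min (part u)"
definition "part_reps = part_rep ` A"
definition "k = card part_reps"
definition "vertex_index u = order_rank A {(x, y). x < y} u"

definition selects :: "nat \<Rightarrow> nat list \<Rightarrow> nat list \<Rightarrow> bool" where
  "selects l xs ys \<longleftrightarrow>
     ys ! (2 * vertex_index l) < xs ! (2 * vertex_index l)
     \<and> xs ! (2 * vertex_index l + 1) < ys ! (2 * vertex_index l + 1)"

definition "decodable w xs ys \<longleftrightarrow> (\<exists>!l. l \<in> part w \<and> selects l xs ys)"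
definition "decode w xs ys = (THE l. l \<in> part w \<and> selects l xs ys)"

definition code_vertices :: "code_vertex set" where
  "code_vertices = {(c, w, xs). c < k \<and> w \<in> A \<and> length xs = 2 * n \<and> set xs \<subseteq> {..<N}}"

fun code_edge :: "code_vertex \<Rightarrow> code_vertex \<Rightarrow> bool" where
  "code_edge (c, w, xs) (c', w', ys) \<longleftrightarrow> c \<noteq> c' \<and>
     (if (w, w') \<notin> SA \<and> decodable w xs ys \<and> decodable w' ys xs
      then (decode w xs ys, decode w' ys xs) \<in> EA else c < c')"

definition "B = to_nat ` code_vertices"
definition "EB = {(a, b). a \<in> B \<and> b \<in> B \<and> code_edge (from_nat a) (from_nat b)}"

lemma equiv_SA: "equiv A SA"
  using K_omega_A unfolding K_omega_def by simp

lemma finite_A: "finite A"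
  using K_omega_A unfolding K_omega_def digraph_def by simp

lemma EA_asym: "(u, v) \<in> EA \<Longrightarrow> (v, u) \<notin> EA"
  using K_omega_A unfolding K_omega_def digraph_def by blast

lemmas SA_in_A = same_part_in_carrier[of _ _ A EA]

lemma part_subset: "part w \<subseteq> A"
  unfolding part_def same_part_def by auto

lemma part_self: "w \<in> A \<Longrightarrow> w \<in> part w"
  unfolding part_def by (rule equiv_class_self[OF equiv_SA])

lemma SA_sym: "(u, v) \<in> SA \<Longrightarrow> (v, u) \<in> SA"
  using equiv_SA unfolding equiv_def by (blast dest: symD)

lemma SA_trans: "(u, v) \<in> SA \<Longrightarrow> (v, w) \<in> SA \<Longrightarrow> (u, w) \<in> SA"
  using equiv_SA unfolding equiv_def by (blast dest: transD)

lemma decode_in_part: "decodable w xs ys \<Longrightarrow> decode w xs ys \<in> part w \<and> selects (decode w xs ys) xs ys"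
  unfolding decodable_def decode_def by (rule theI')

lemma parts_apart:
  assumes "(w, w') \<notin> SA" "d \<in> part w" "d' \<in> part w'"
  shows "(d, d') \<notin> SA"
proof
  assume "(d, d') \<in> SA"
  moreover have "(w, d) \<in> SA" "(d', w') \<in> SA" using assms SA_sym unfolding part_def by auto
  ultimately show False using assms(1) SA_trans by blast
qed

lemma code_edge_irrefl: "\<not> code_edge x x"
  by (cases x) auto

lemma code_edge_columns: "code_edge x y \<Longrightarrow> fst x \<noteq> fst y"
  by (cases x; cases y) auto

lemma code_edge_asym: "code_edge x y \<Longrightarrow> \<not> code_edge y x"
proof (cases x; cases y)
  fix c w xs c' w' ys assume xy: "x = (c, w, xs)" "y = (c', w', ys)" and e: "code_edge x y"
  have "(w, w') \<notin> SA \<longleftrightarrow> (w', w) \<notin> SA" using SA_sym by blast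
  then show "\<not> code_edge y x"
    using e EA_asym unfolding xy by (auto split: if_splits)
qed

lemma code_edge_total:
  assumes "x \<in> code_vertices" "y \<in> code_vertices" "fst x \<noteq> fst y"
  shows "code_edge x y \<or> code_edge y x"
proof (cases x; cases y)
  fix c w xs c' w' ys assume xy: "x = (c, w, xs)" "y = (c', w', ys)"
  have sym: "(w, w') \<notin> SA \<longleftrightarrow> (w', w) \<notin> SA" using SA_sym by blast
  show ?thesis
  proof (cases "(w, w') \<notin> SA \<and> decodable w xs ys \<and> decodable w' ys xs")
    case True
    let ?d = "decode w xs ys" and ?d' = "decode w' ys xs"
    have d: "?d \<in> part w" "?d' \<in> part w'" using True decode_in_part by auto
    then have "(?d, ?d') \<notin> SA" using True parts_apart by blast
    moreover have "?d \<in> A" "?d' \<in> A" using d part_subset by auto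
    ultimately have "(?d, ?d') \<in> EA \<or> (?d', ?d) \<in> EA" by (intro edge_between_parts)
    then show ?thesis using True assms unfolding xy by (auto simp: sym)
  next
    case False
    then show ?thesis using assms unfolding xy by (auto simp: sym)
  qed
qed

lemma finite_code_vertices: "finite code_vertices"
proof -
  have "code_vertices \<subseteq> {..<k} \<times> A \<times> {xs. set xs \<subseteq> {..<N} \<and> length xs = 2 * n}"
    unfolding code_vertices_def by auto
  moreover have "finite ({..<k} \<times> A \<times> {xs. set xs \<subseteq> {..<N} \<and> length xs = 2 * n})"
    using finite_A by (intro finite_cartesian_product finite_lists_length_eq) auto
  ultimately show ?thesis by (rule finite_subset)
qed

lemma from_nat_B: "a \<in> B \<Longrightarrow> from_nat a \<in> code_vertices \<and> to_nat (from_nat a :: code_vertex) = a"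
  unfolding B_def by auto

lemma same_part_B:
  "same_part B EB = {(a, b). a \<in> B \<and> b \<in> B \<and> fst (from_nat a :: code_vertex) = fst (from_nat b :: code_vertex)}"
proof -
  have "(a = b \<or> ((a, b) \<notin> EB \<and> (b, a) \<notin> EB)) \<longleftrightarrow>
      fst (from_nat a :: code_vertex) = fst (from_nat b :: code_vertex)" if "a \<in> B" "b \<in> B" for a b
    using that code_edge_total[of "from_nat a" "from_nat b"] from_nat_B
      code_edge_columns[of "from_nat a" "from_nat b"] code_edge_columns[of "from_nat b" "from_nat a"]
    unfolding EB_def by auto
  then show ?thesis unfolding same_part_def by auto
qed

lemma K_omega_B: "K_omega B EB"
proof -
  have "digraph B EB"
    unfolding digraph_def
  proof (intro conjI allI impI)
    show "finite B" unfolding B_def using finite_code_vertices by simp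
    show "EB \<subseteq> B \<times> B" unfolding EB_def by auto
    show "(u, u) \<notin> EB" for u unfolding EB_def using code_edge_irrefl by auto
    show "(v, u) \<notin> EB" if "(u, v) \<in> EB" for u v using that code_edge_asym unfolding EB_def by auto
  qed
  moreover have "equiv B (same_part B EB)"
    unfolding same_part_B by (rule equivI) (auto simp: refl_on_def sym_def trans_def)
  ultimately show ?thesis unfolding K_omega_def by simp
qed

end

section \<open>Embedding into the universal graph under arbitrary convex orders\<close>

definition key_scale :: "nat \<Rightarrow> nat" where
  "key_scale n = n * n + 1"

definition block_size :: "nat \<Rightarrow> nat" where
  "block_size n = (2 * n + 3) * key_scale n"

definition homog_size :: "nat \<Rightarrow> nat" where
  "homog_size n = 2 * n * block_size n"

locale code_embedding = multipartite_code +
  fixes RA RB :: "(nat \<times> nat) set"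
  assumes A_nonempty: "A \<noteq> {}"
    and ramsey_N: "partn_lst {..<N} (replicate (card (Pow A)) (homog_size (card A))) (4 * card A)"
    and K_omega_star_A: "K_omega_star A EA RA" and K_omega_star_B: "K_omega_star B EB RB"
begin

abbreviation "G \<equiv> key_scale n"
abbreviation "M \<equiv> homog_size n"

lemma n_pos: "0 < n"
  using A_nonempty finite_A unfolding n_def by (simp add: card_gt_0_iff)

lemma order_A: "strict_linear_order_on A RA"
  using K_omega_star_A unfolding K_omega_star_def by simp

lemma order_B: "strict_linear_order_on B RB"
  using K_omega_star_B unfolding K_omega_star_def by simp

lemma part_eq: "(u, v) \<in> SA \<Longrightarrow> part u = part v"
  unfolding part_def using equiv_SA by (rule equiv_class_eq)

lemma part_rep_in: "u \<in> A \<Longrightarrow> part_rep u \<in> part u \<and> part_rep u \<in> A"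
proof -
  assume u: "u \<in> A"
  have "finite (part u)" using finite_A part_subset finite_subset by blast
  moreover have "part u \<noteq> {}" using part_self[OF u] by blast
  ultimately have "part_rep u \<in> part u" unfolding part_rep_def by (rule Min_in)
  then show ?thesis using part_subset by blast
qed

lemma SA_part_rep: "u \<in> A \<Longrightarrow> (u, part_rep u) \<in> SA"
  using part_rep_in unfolding part_def by blast

lemma part_rep_eq_iff: "u \<in> A \<Longrightarrow> v \<in> A \<Longrightarrow> part_rep u = part_rep v \<longleftrightarrow> (u, v) \<in> SA"
proof
  assume "u \<in> A" "v \<in> A" "part_rep u = part_rep v"
  then show "(u, v) \<in> SA" using SA_part_rep[of u] SA_part_rep[of v] SA_sym SA_trans by metis
next
  assume "(u, v) \<in> SA"
  then show "part_rep u = part_rep v" unfolding part_rep_def using part_eq by simp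
qed

lemma RA_part_rep_iff:
  assumes "u \<in> A" "v \<in> A" "(u, v) \<notin> SA"
  shows "(u, v) \<in> RA \<longleftrightarrow> (part_rep u, part_rep v) \<in> RA"
proof -
  have r: "(u, part_rep u) \<in> SA" "(v, part_rep v) \<in> SA" using SA_part_rep assms by auto
  have r': "(part_rep u, u) \<in> SA" "(part_rep v, v) \<in> SA" using r SA_sym by auto
  have "(part_rep u, part_rep v) \<notin> SA" using assms r r' SA_trans by metis
  then show ?thesis using K_omega_star_order_between_parts[OF K_omega_star_A] r r' assms(3) by metis
qed

lemma finite_part_reps: "finite part_reps"
  unfolding part_reps_def using finite_A by simp

lemma order_part_reps: "finite_strict_order part_reps RA"
  by (rule finite_strict_order_subset[OF order_A _ finite_part_reps]) (auto simp: part_reps_def part_rep_in)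

definition "part_rank = order_rank part_reps RA"

lemma part_rank_image: "part_rank ` part_reps = {..<k}"
  unfolding part_rank_def k_def by (rule finite_strict_order.order_rank_image[OF order_part_reps])

lemma ramsey_homogeneous:
  assumes "f \<in> nsets {..<N} (4 * n) \<rightarrow> {..<card (Pow A)}"
  shows "\<exists>H i. H \<subseteq> {..<N} \<and> finite H \<and> card H = M \<and> f ` nsets H (4 * n) \<subseteq> {i}"
proof -
  obtain i H where "i < length (replicate (card (Pow A)) M)"
      "H \<in> nsets {..<N} (replicate (card (Pow A)) M ! i)" "f ` nsets H (4 * n) \<subseteq> {i}"
    using partn_lstE[OF ramsey_N[folded n_def] assms] by auto
  then show ?thesis unfolding nsets_def by auto
qed

lemma M_ge: "4 * n \<le> M"
proof -
  have "1 \<le> key_scale n" unfolding key_scale_def by simp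
  then have "2 * 1 \<le> (2 * n + 3) * key_scale n" by (intro mult_le_mono) simp_all
  then have "2 \<le> block_size n" unfolding block_size_def by simp
  then have "2 * n * 2 \<le> 2 * n * block_size n" by (intro mult_le_mono2)
  then show ?thesis unfolding homog_size_def by simp
qed

lemma N_pos: "0 < N"
proof -
  have "0 < card (Pow A)" using finite_A by (auto simp: card_gt_0_iff)
  then have "(\<lambda>_. 0) \<in> nsets {..<N} (4 * n) \<rightarrow> {..<card (Pow A)}" by (simp add: Pi_def)
  from ramsey_homogeneous[OF this] obtain H where "H \<subseteq> {..<N}" "card H = M" by blast
  then have "M \<le> N" using card_mono[of "{..<N}" H] by simp
  then show ?thesis using M_ge n_pos by simp
qed

definition "label0 = (SOME r. r \<in> A)"

lemma label0_in: "label0 \<in> A"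
  unfolding label0_def using A_nonempty by (simp add: some_in_eq)

definition "column_base c = to_nat (c, label0, replicate (2 * n) (0::nat))"

lemma column_base_in: "c < k \<Longrightarrow> column_base c \<in> B"
  unfolding column_base_def B_def code_vertices_def using label0_in N_pos by auto

lemma inj_column_base: "inj column_base"
  unfolding column_base_def by (rule injI) simp

definition "column_bases = column_base ` {..<k}"

lemma card_column_bases: "card column_bases = k"
  unfolding column_bases_def using card_image[OF inj_on_subset[OF inj_column_base, of "{..<k}"]] by simp

lemma order_column_bases: "finite_strict_order column_bases RB"
  by (rule finite_strict_order_subset[OF order_B]) (auto simp: column_bases_def column_base_in)

definition "column_rank = order_rank column_bases RB"

lemma column_rank_image: "column_rank ` column_bases = {..<k}"
  unfolding column_rank_def
  using finite_strict_order.order_rank_image[OF order_column_bases] card_column_bases by simp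

definition "column u = (THE c. c < k \<and> column_rank (column_base c) = part_rank (part_rep u))"

lemma column_spec:
  assumes "u \<in> A"
  shows "column u < k \<and> column_rank (column_base (column u)) = part_rank (part_rep u)"
proof -
  have "part_rep u \<in> part_reps" using assms unfolding part_reps_def by simp
  then have "part_rank (part_rep u) \<in> column_rank ` column_base ` {..<k}"
    using part_rank_image column_rank_image unfolding column_bases_def by auto
  then obtain c where c: "c < k" "column_rank (column_base c) = part_rank (part_rep u)" by auto
  have "c' = c" if "c' < k" "column_rank (column_base c') = part_rank (part_rep u)" for c'
  proof -
    have "column_base c' \<in> column_bases" "column_base c \<in> column_bases"
      using that c unfolding column_bases_def by auto
    then have "column_base c' = column_base c"
      using that c inj_onD[OF finite_strict_order.inj_on_order_rank[OF order_column_bases]]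
      unfolding column_rank_def by auto
    then show ?thesis using inj_column_base by (meson injD)
  qed
  then have "\<exists>!c. c < k \<and> column_rank (column_base c) = part_rank (part_rep u)" using c by blast
  then show ?thesis unfolding column_def by (rule theI')
qed

lemma column_same_part: "(u, v) \<in> SA \<Longrightarrow> column u = column v"
  using part_rep_eq_iff SA_in_A unfolding column_def by metis

lemma column_other_part:
  assumes "u \<in> A" "v \<in> A" "(u, v) \<notin> SA"
  shows "column u \<noteq> column v \<and> ((u, v) \<in> RA \<longleftrightarrow> (column_base (column u), column_base (column v)) \<in> RB)"
proof -
  have R: "part_rep u \<in> part_reps" "part_rep v \<in> part_reps" using assms unfolding part_reps_def by auto
  have cu: "column u < k" "column_rank (column_base (column u)) = part_rank (part_rep u)"
    and cv: "column v < k" "column_rank (column_base (column v)) = part_rank (part_rep v)"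
    using column_spec assms by auto
  have bases: "column_base (column u) \<in> column_bases" "column_base (column v) \<in> column_bases"
    using cu cv unfolding column_bases_def by auto
  have "(u, v) \<in> RA \<longleftrightarrow> (part_rep u, part_rep v) \<in> RA" using RA_part_rep_iff assms by simp
  also have "\<dots> \<longleftrightarrow> part_rank (part_rep u) < part_rank (part_rep v)"
    unfolding part_rank_def using finite_strict_order.order_rank_less_iff[OF order_part_reps R] .
  also have "\<dots> \<longleftrightarrow> column_rank (column_base (column u)) < column_rank (column_base (column v))"
    using cu cv by simp
  also have "\<dots> \<longleftrightarrow> (column_base (column u), column_base (column v)) \<in> RB"
    unfolding column_rank_def using finite_strict_order.order_rank_less_iff[OF order_column_bases bases]
    by simp
  finally have order: "(u, v) \<in> RA \<longleftrightarrow> (column_base (column u), column_base (column v)) \<in> RB" .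
  have "part_rep u \<noteq> part_rep v" using part_rep_eq_iff assms by simp
  then have "part_rank (part_rep u) \<noteq> part_rank (part_rep v)"
    using finite_strict_order.inj_on_order_rank[OF order_part_reps] R
    unfolding part_rank_def by (simp add: inj_on_eq_iff)
  then have "column u \<noteq> column v" using cu(2) cv(2) by auto
  with order show ?thesis by simp
qed

lemma RB_columns:
  assumes "x \<in> B" "y \<in> B" "fst (from_nat x :: code_vertex) = c" "fst (from_nat y :: code_vertex) = c'"
    "c \<noteq> c'" "c < k" "c' < k"
  shows "(x, y) \<in> RB \<longleftrightarrow> (column_base c, column_base c') \<in> RB"
proof -
  have fst_base: "fst (from_nat (column_base d) :: code_vertex) = d" for d
    unfolding column_base_def by simp
  have same: "(x, column_base c) \<in> same_part B EB" "(y, column_base c') \<in> same_part B EB"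
    "(column_base c, x) \<in> same_part B EB" "(column_base c', y) \<in> same_part B EB"
    using assms column_base_in fst_base unfolding same_part_B by auto
  have apart: "(x, y) \<notin> same_part B EB" "(column_base c, column_base c') \<notin> same_part B EB"
    using assms fst_base unfolding same_part_B by auto
  show ?thesis
    using K_omega_star_order_between_parts[OF K_omega_star_B same(1,2) apart(1)]
      K_omega_star_order_between_parts[OF K_omega_star_B same(3,4) apart(2)] by blast
qed

definition evens :: "nat set \<Rightarrow> nat list" where
  "evens U = map (\<lambda>b. sorted_list_of_set U ! (2 * b)) [0..<2 * n]"

definition odds :: "nat set \<Rightarrow> nat list" where
  "odds U = map (\<lambda>b. sorted_list_of_set U ! (2 * b + 1)) [0..<2 * n]"

definition ascending_labels :: "nat set \<Rightarrow> nat set" where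
  "ascending_labels U =
     {w \<in> A. (to_nat (column w, part_rep w, evens U), to_nat (column w, part_rep w, odds U)) \<in> RB}"

definition "colour_index = (SOME f. bij_betw f (Pow A) {0..<card (Pow A)})"

lemma bij_betw_colour_index: "bij_betw colour_index (Pow A) {0..<card (Pow A)}"
  unfolding colour_index_def using ex_bij_betw_finite_nat[of "Pow A"] finite_A
  by (metis finite_Pow_iff someI_ex)

definition "H = (SOME H. H \<subseteq> {..<N} \<and> finite H \<and> card H = M
   \<and> (\<exists>i. (colour_index \<circ> ascending_labels) ` nsets H (4 * n) \<subseteq> {i}))"

lemma H_spec: "H \<subseteq> {..<N} \<and> finite H \<and> card H = M
   \<and> (\<exists>i. (colour_index \<circ> ascending_labels) ` nsets H (4 * n) \<subseteq> {i})"
proof -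
  have "colour_index \<circ> ascending_labels \<in> nsets {..<N} (4 * n) \<rightarrow> {..<card (Pow A)}"
    using bij_betwE[OF bij_betw_colour_index] unfolding ascending_labels_def by auto
  from ramsey_homogeneous[OF this] have "\<exists>H. H \<subseteq> {..<N} \<and> finite H \<and> card H = M
      \<and> (\<exists>i. (colour_index \<circ> ascending_labels) ` nsets H (4 * n) \<subseteq> {i})"
    by blast
  then show ?thesis unfolding H_def by (rule someI_ex)
qed

lemma ascending_labels_homogeneous:
  assumes "U \<in> nsets H (4 * n)" "U' \<in> nsets H (4 * n)"
  shows "ascending_labels U = ascending_labels U'"
proof -
  obtain i where i: "(colour_index \<circ> ascending_labels) ` nsets H (4 * n) \<subseteq> {i}" using H_spec by blast
  have "colour_index (ascending_labels U) = colour_index (ascending_labels U')" using i assms by auto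
  moreover have "ascending_labels U \<in> Pow A" "ascending_labels U' \<in> Pow A"
    unfolding ascending_labels_def by auto
  ultimately show ?thesis using bij_betw_imp_inj_on[OF bij_betw_colour_index] by (meson inj_onD)
qed

definition "H_nth i = sorted_list_of_set H ! i"

lemma H_nth_mono: "i < j \<Longrightarrow> j < M \<Longrightarrow> H_nth i < H_nth j"
  unfolding H_nth_def using H_spec sorted_wrt_nth_less[of "(<)" "sorted_list_of_set H" i j] by simp

lemma H_nth_in: "i < M \<Longrightarrow> H_nth i \<in> H"
  unfolding H_nth_def using H_spec nth_mem[of i "sorted_list_of_set H"] by simp

lemma H_nth_less_N: "i < M \<Longrightarrow> H_nth i < N"
  using H_nth_in H_spec by blast

lemma H_nth_less_iff: "i < M \<Longrightarrow> j < M \<Longrightarrow> H_nth i < H_nth j \<longleftrightarrow> i < j"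
  using H_nth_mono[of i j] H_nth_mono[of j i] by (cases i j rule: linorder_cases) auto

lemma initial_segment_nsets: "H_nth ` {..<4 * n} \<in> nsets H (4 * n)"
proof -
  have "inj_on H_nth {..<4 * n}"
    using H_nth_less_iff M_ge by (intro inj_onI) (metis lessThan_iff nat_neq_iff order_less_le_trans)
  then have "card (H_nth ` {..<4 * n}) = 4 * n" by (simp add: card_image)
  moreover have "H_nth ` {..<4 * n} \<subseteq> H" using H_nth_in M_ge by auto
  ultimately show ?thesis unfolding nsets_def by auto
qed

definition "D = ascending_labels (H_nth ` {..<4 * n})"

definition "pos u = (if u \<in> D then order_rank A RA u else order_rank A (RA\<inverse>) u)"

lemma order_A_finite: "finite_strict_order A RA"
  by (rule finite_strict_order_subset[OF order_A _ finite_A]) simp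

lemma order_A_converse: "finite_strict_order A (RA\<inverse>)"
  by (rule finite_strict_order_converse[OF order_A finite_A])

lemma pos_less_n: "u \<in> A \<Longrightarrow> pos u < n"
  unfolding pos_def n_def
  using finite_strict_order.order_rank_less_card[OF order_A_finite]
    finite_strict_order.order_rank_less_card[OF order_A_converse] by auto

lemma D_same_part: "(u, v) \<in> SA \<Longrightarrow> u \<in> D \<longleftrightarrow> v \<in> D"
proof -
  assume uv: "(u, v) \<in> SA"
  then have "part_rep u = part_rep v" "column u = column v" "u \<in> A" "v \<in> A"
    using part_rep_eq_iff SA_in_A column_same_part by auto
  then show ?thesis unfolding D_def ascending_labels_def by auto
qed

lemma pos_inj_on_part:
  assumes "(u, v) \<in> SA" "pos u = pos v"
  shows "u = v"
proof -
  have uv: "u \<in> A" "v \<in> A" using SA_in_A assms by auto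
  show ?thesis
  proof (cases "u \<in> D")
    case True
    then have "v \<in> D" using D_same_part assms by blast
    then show ?thesis
      using assms True uv inj_onD[OF finite_strict_order.inj_on_order_rank[OF order_A_finite]]
      unfolding pos_def by auto
  next
    case False
    then have "v \<notin> D" using D_same_part assms by blast
    then show ?thesis
      using assms False uv inj_onD[OF finite_strict_order.inj_on_order_rank[OF order_A_converse]]
      unfolding pos_def by auto
  qed
qed

lemma pos_less_iff:
  assumes "(u, v) \<in> SA"
  shows "u \<in> D \<Longrightarrow> (u, v) \<in> RA \<longleftrightarrow> pos u < pos v"
    and "u \<notin> D \<Longrightarrow> (v, u) \<in> RA \<longleftrightarrow> pos u < pos v"
proof -
  have uv: "u \<in> A" "v \<in> A" using SA_in_A assms by auto
  show "u \<in> D \<Longrightarrow> (u, v) \<in> RA \<longleftrightarrow> pos u < pos v"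
    using D_same_part[OF assms] finite_strict_order.order_rank_less_iff[OF order_A_finite uv]
    unfolding pos_def by auto
  show "u \<notin> D \<Longrightarrow> (v, u) \<in> RA \<longleftrightarrow> pos u < pos v"
    using D_same_part[OF assms] finite_strict_order.order_rank_less_iff[OF order_A_converse uv]
    unfolding pos_def by auto
qed

lemma vertex_index_image: "vertex_index ` A = {..<n}"
  unfolding vertex_index_def n_def
  by (rule finite_strict_order.order_rank_image[OF finite_strict_order_less[OF finite_A]])

lemma inj_on_vertex_index: "inj_on vertex_index A"
  unfolding vertex_index_def
  by (rule finite_strict_order.inj_on_order_rank[OF finite_strict_order_less[OF finite_A]])

lemma vertex_index_less_n: "u \<in> A \<Longrightarrow> vertex_index u < n"
  using vertex_index_image by auto

text \<open>Coordinates \<open>2 i\<close> and \<open>2 i + 1\<close> of a code word belong to the vertex of index \<open>i\<close>.\<close>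
definition "coord_vertex b = inv_into A vertex_index (b div 2)"

lemma coord_vertex_in: "b < 2 * n \<Longrightarrow> coord_vertex b \<in> A"
  unfolding coord_vertex_def using vertex_index_image by (intro inv_into_into) auto

lemma coord_vertex_index:
  "l \<in> A \<Longrightarrow> coord_vertex (2 * vertex_index l) = l \<and> coord_vertex (2 * vertex_index l + 1) = l"
  unfolding coord_vertex_def using inj_on_vertex_index by simp

text \<open>
  The key of \<open>u\<close> in the two coordinates (\<open>s = 0, 1\<close>) of \<open>l\<close>. Inside the part of \<open>l\<close> it is
  \<open>(2 pos u + 1) G\<close>; outside it lies in \<open>[2 pos l G, (2 pos l + 1) G)\<close> for \<open>s = 0\<close> and in
  \<open>[(2 pos l + 2) G, (2 pos l + 3) G)\<close> for \<open>s = 1\<close>, the remainder \<open>< G\<close> making it increase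
  with \<open>pos u\<close>. Hence for \<open>u\<close> in the part of \<open>l\<close> and \<open>v\<close> outside it, \<open>l\<close> is selected by
  \<open>(code u, code v)\<close> iff \<open>pos l = pos u\<close>.
\<close>
definition key :: "nat \<Rightarrow> nat \<Rightarrow> nat \<Rightarrow> nat" where
  "key l s u = (if (u, l) \<in> SA then (2 * pos u + 1) * G + 0
                else (2 * pos l + 2 * s) * G + (pos u * n + vertex_index u))"

definition "slot u b = b * block_size n + key (coord_vertex b) (b mod 2) u"
definition "code u = map (\<lambda>b. H_nth (slot u b)) [0..<2 * n]"
definition "embed_vertex u = to_nat (column u, part_rep u, code u)"

lemma G_pos: "0 < G"
  unfolding key_scale_def by simp

lemma tiebreak_less_G: "u \<in> A \<Longrightarrow> pos u * n + vertex_index u < G"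
proof -
  assume u: "u \<in> A"
  have "pos u * n + vertex_index u < (pos u + 1) * n" using vertex_index_less_n u by simp
  also have "\<dots> \<le> n * n" using pos_less_n[OF u] by (intro mult_le_mono1) simp
  finally show ?thesis unfolding key_scale_def by simp
qed

lemma key_less_block_size:
  assumes "u \<in> A" "l \<in> A" "s < 2"
  shows "key l s u < block_size n"
proof -
  have "(2 * pos u + 1) * G + 0 < (2 * n + 3) * G + 0"
    and "(2 * pos l + 2 * s) * G + (pos u * n + vertex_index u) < (2 * n + 3) * G + 0"
    using pos_less_n assms G_pos tiebreak_less_G[OF assms(1)]
    by (subst mult_add_less_mult_add_iff; force)+
  then show ?thesis unfolding key_def block_size_def by simp
qed

lemma slot_less_M:
  assumes "u \<in> A" "b < 2 * n"
  shows "slot u b < M"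
proof -
  have "slot u b < b * block_size n + block_size n"
    unfolding slot_def using key_less_block_size assms coord_vertex_in by simp
  also have "\<dots> = (b + 1) * block_size n" by simp
  also have "\<dots> \<le> 2 * n * block_size n" using assms(2) by (intro mult_le_mono1) simp
  finally show ?thesis unfolding homog_size_def .
qed

lemma length_code: "length (code u) = 2 * n"
  unfolding code_def by simp

lemma nth_code: "b < 2 * n \<Longrightarrow> code u ! b = H_nth (slot u b)"
  unfolding code_def by simp

lemma set_code: "u \<in> A \<Longrightarrow> set (code u) \<subseteq> {..<N}"
  unfolding code_def using H_nth_less_N slot_less_M by auto

lemma embed_vertex_in_B:
  "u \<in> A \<Longrightarrow> embed_vertex u \<in> B \<and> from_nat (embed_vertex u) = (column u, part_rep u, code u)"
  unfolding embed_vertex_def B_def code_vertices_def using column_spec part_rep_in length_code set_code by auto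

lemma key_mono_in_part:
  assumes "(u, v) \<in> SA" "pos u < pos v"
  shows "key l s u < key l s v"
proof (cases "(u, l) \<in> SA")
  case True
  then have "(v, l) \<in> SA" using assms SA_sym SA_trans by blast
  moreover have "(2 * pos u + 1) * G + 0 < (2 * pos v + 1) * G + 0"
    using assms G_pos by (subst mult_add_less_mult_add_iff) auto
  ultimately show ?thesis using True unfolding key_def by simp
next
  case False
  then have "(v, l) \<notin> SA" using assms SA_sym SA_trans by blast
  have "pos u * n + vertex_index u < (pos u + 1) * n"
    using vertex_index_less_n SA_in_A[OF assms(1)] by simp
  also have "\<dots> \<le> pos v * n" using assms(2) by (intro mult_le_mono1) simp
  finally show ?thesis using False \<open>(v, l) \<notin> SA\<close> unfolding key_def by simp
qed

lemma slot_less_next_slot: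
  assumes "u \<in> A" "b < b'" "b' < 2 * n"
  shows "slot u b < slot v b'"
proof -
  have "slot u b < (b + 1) * block_size n"
    unfolding slot_def using key_less_block_size assms coord_vertex_in by simp
  also have "\<dots> \<le> b' * block_size n" using assms(2) by (intro mult_le_mono1) simp
  also have "\<dots> \<le> slot v b'" unfolding slot_def by simp
  finally show ?thesis .
qed

lemma slot_mono_in_part:
  assumes "(u, v) \<in> SA" "pos u < pos v"
  shows "slot u b < slot v b"
  using key_mono_in_part[OF assms] unfolding slot_def by simp

definition "interleave u v j = (if even j then slot u (j div 2) else slot v (j div 2))"

lemma interleave_mono:
  assumes "(u, v) \<in> SA" "pos u < pos v" "j < j'" "j' < 4 * n"
  shows "interleave u v j < interleave u v j'"
proof (cases "j div 2 < j' div 2")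
  case True
  then show ?thesis
    unfolding interleave_def using slot_less_next_slot SA_in_A[OF assms(1)] assms by auto
next
  case False
  then have "j div 2 = j' div 2" using assms(3) by (simp add: div_le_mono leD le_neq_implies_less)
  moreover then have "even j" "odd j'" using assms(3) by presburger+
  ultimately show ?thesis unfolding interleave_def using slot_mono_in_part assms by auto
qed

lemma interleave_less_M: "(u, v) \<in> SA \<Longrightarrow> j < 4 * n \<Longrightarrow> interleave u v j < M"
  unfolding interleave_def using slot_less_M SA_in_A by auto

definition "merged u v = (\<lambda>j. H_nth (interleave u v j)) ` {..<4 * n}"

lemma sorted_list_of_merged:
  assumes "(u, v) \<in> SA" "pos u < pos v"
  shows "sorted_list_of_set (merged u v) = map (\<lambda>j. H_nth (interleave u v j)) [0..<4 * n]"
  unfolding merged_def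
  by (rule sorted_list_of_set_image_strict_mono)
    (use interleave_mono[OF assms] interleave_less_M[OF assms(1)] H_nth_mono in auto)

lemma evens_odds_merged:
  assumes "(u, v) \<in> SA" "pos u < pos v"
  shows "evens (merged u v) = code u" "odds (merged u v) = code v"
  unfolding evens_def odds_def code_def sorted_list_of_merged[OF assms] interleave_def by auto

lemma merged_nsets:
  assumes "(u, v) \<in> SA" "pos u < pos v"
  shows "merged u v \<in> nsets H (4 * n)"
proof -
  have "inj_on (\<lambda>j. H_nth (interleave u v j)) {..<4 * n}"
    using interleave_mono[OF assms] interleave_less_M[OF assms(1)] H_nth_mono
    by (intro inj_onI) (metis lessThan_iff nat_neq_iff order_less_irrefl)
  then have "card (merged u v) = 4 * n" unfolding merged_def by (simp add: card_image)
  moreover have "merged u v \<subseteq> H"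
    unfolding merged_def using H_nth_in interleave_less_M[OF assms(1)] by auto
  ultimately show ?thesis unfolding nsets_def merged_def by auto
qed

lemma RB_embed_vertex_iff_D:
  assumes "(u, v) \<in> SA" "pos u < pos v"
  shows "(embed_vertex u, embed_vertex v) \<in> RB \<longleftrightarrow> u \<in> D"
proof -
  have "ascending_labels (merged u v) = D"
    unfolding D_def by (rule ascending_labels_homogeneous[OF merged_nsets[OF assms] initial_segment_nsets])
  moreover have "column v = column u" "part_rep v = part_rep u" "u \<in> A"
    using column_same_part part_rep_eq_iff SA_in_A assms by metis+
  ultimately show ?thesis
    unfolding ascending_labels_def embed_vertex_def evens_odds_merged[OF assms] by auto
qed

lemma selects_code_iff:
  assumes uv: "u \<in> A" "v \<in> A" "(u, v) \<notin> SA" and l: "l \<in> part u"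
  shows "selects l (code u) (code v) \<longleftrightarrow> l = u"
proof -
  have ul: "(u, l) \<in> SA" using l unfolding part_def by simp
  then have lA: "l \<in> A" using SA_in_A by blast
  have vl: "(v, l) \<notin> SA" using ul uv SA_sym SA_trans by blast
  define b where "b = 2 * vertex_index l"
  have b: "b < 2 * n" "b + 1 < 2 * n" using vertex_index_less_n[OF lA] unfolding b_def by auto
  have coord: "coord_vertex b = l" "coord_vertex (b + 1) = l" "b mod 2 = 0" "(b + 1) mod 2 = 1"
    using coord_vertex_index[OF lA] unfolding b_def by auto
  let ?r = "pos v * n + vertex_index v"
  have r: "?r < G" using tiebreak_less_G[OF uv(2)] .
  have "selects l (code u) (code v) \<longleftrightarrow>
      H_nth (slot v b) < H_nth (slot u b) \<and> H_nth (slot u (b + 1)) < H_nth (slot v (b + 1))"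
    unfolding selects_def b_def[symmetric] using b nth_code by simp
  also have "\<dots> \<longleftrightarrow> slot v b < slot u b \<and> slot u (b + 1) < slot v (b + 1)"
    using H_nth_less_iff slot_less_M uv b by simp
  also have "\<dots> \<longleftrightarrow> key l 0 v < key l 0 u \<and> key l 1 u < key l 1 v"
    unfolding slot_def coord by simp
  also have "\<dots> \<longleftrightarrow> (2 * pos l + 0) * G + ?r < (2 * pos u + 1) * G + 0
      \<and> (2 * pos u + 1) * G + 0 < (2 * pos l + 2) * G + ?r"
    unfolding key_def using ul vl by simp
  also have "\<dots> \<longleftrightarrow> pos l = pos u"
    unfolding mult_add_less_mult_add_iff[OF r G_pos] mult_add_less_mult_add_iff[OF G_pos r]
    by presburger
  also have "\<dots> \<longleftrightarrow> l = u" using pos_inj_on_part ul SA_sym by blast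
  finally show ?thesis .
qed

lemma decode_code:
  assumes "u \<in> A" "v \<in> A" "(u, v) \<notin> SA"
  shows "decodable (part_rep u) (code u) (code v) \<and> decode (part_rep u) (code u) (code v) = u"
proof -
  have "part (part_rep u) = part u" using part_eq SA_part_rep SA_sym assms by metis
  then have "l \<in> part (part_rep u) \<and> selects l (code u) (code v) \<longleftrightarrow> l = u" for l
    using selects_code_iff[OF assms] part_self[OF assms(1)] by blast
  then show ?thesis unfolding decodable_def decode_def by simp
qed

lemma code_neq:
  assumes "(u, v) \<in> SA" "u \<noteq> v"
  shows "code u \<noteq> code v"
proof -
  have uv: "u \<in> A" "v \<in> A" using SA_in_A[OF assms(1)] by auto
  have vu: "(v, u) \<in> SA" using SA_sym assms(1) by blast
  have "pos u \<noteq> pos v" using pos_inj_on_part assms by blast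
  then have "slot u 0 \<noteq> slot v 0"
    using slot_mono_in_part[OF assms(1)] slot_mono_in_part[OF vu] by (metis less_irrefl nat_neq_iff)
  moreover have "0 < 2 * n" using n_pos by simp
  ultimately have "code u ! 0 \<noteq> code v ! 0"
    using nth_code H_nth_less_iff slot_less_M uv by (metis less_irrefl nat_neq_iff)
  then show ?thesis by auto
qed

lemma RB_embed_vertex_in_part:
  assumes "(u, v) \<in> SA"
  shows "(u, v) \<in> RA \<longleftrightarrow> (embed_vertex u, embed_vertex v) \<in> RB"
proof (cases "u = v")
  case True
  then show ?thesis
    using strict_linear_order_on_asym[OF order_A] strict_linear_order_on_asym[OF order_B] by blast
next
  case False
  have vu: "(v, u) \<in> SA" using SA_sym assms by blast
  have "embed_vertex u \<noteq> embed_vertex v" using code_neq[OF assms False] unfolding embed_vertex_def by simp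
  then have total_B: "(embed_vertex u, embed_vertex v) \<in> RB \<or> (embed_vertex v, embed_vertex u) \<in> RB"
    using order_B embed_vertex_in_B SA_in_A[OF assms] unfolding strict_linear_order_on_def by blast
  have "pos u \<noteq> pos v" using pos_inj_on_part assms False by blast
  then consider "pos u < pos v" | "pos v < pos u" by linarith
  then show ?thesis
  proof cases
    case 1
    then show ?thesis using pos_less_iff[OF assms] RB_embed_vertex_iff_D[OF assms 1]
      strict_linear_order_on_asym[OF order_A] by (cases "u \<in> D") blast+
  next
    case 2
    then show ?thesis using pos_less_iff[OF vu] RB_embed_vertex_iff_D[OF vu 2] D_same_part[OF vu]
      strict_linear_order_on_asym[OF order_A] strict_linear_order_on_asym[OF order_B] total_B
      by (cases "v \<in> D") blast+
  qed
qed

lemma embedding_embed_vertex: "embedding embed_vertex A EA RA B EB RB"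
  unfolding embedding_def
proof (intro conjI ballI)
  show "embed_vertex ` A \<subseteq> B" using embed_vertex_in_B by auto
  show "inj_on embed_vertex A"
  proof (rule inj_onI)
    fix u v assume uv: "u \<in> A" "v \<in> A" "embed_vertex u = embed_vertex v"
    then have "(u, v) \<in> SA" "code u = code v"
      using part_rep_eq_iff unfolding embed_vertex_def by auto
    then show "u = v" using code_neq by blast
  qed
next
  fix u v assume uv: "u \<in> A" "v \<in> A"
  show "(u, v) \<in> EA \<longleftrightarrow> (embed_vertex u, embed_vertex v) \<in> EB"
  proof (cases "(u, v) \<in> SA")
    case True
    then show ?thesis
      using column_same_part K_omega_no_edge_in_part[OF K_omega_A True] embed_vertex_in_B uv
      unfolding EB_def by auto
  next
    case False
    have vu: "(v, u) \<notin> SA" using False SA_sym by blast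
    have "(part_rep u, part_rep v) \<notin> SA" using False SA_part_rep SA_sym SA_trans uv by metis
    then have "code_edge (column u, part_rep u, code u) (column v, part_rep v, code v) \<longleftrightarrow> (u, v) \<in> EA"
      using column_other_part[OF uv False] decode_code[OF uv False] decode_code[OF uv(2,1) vu] by simp
    then show ?thesis using embed_vertex_in_B uv unfolding EB_def by auto
  qed
  show "(u, v) \<in> RA \<longleftrightarrow> (embed_vertex u, embed_vertex v) \<in> RB"
  proof (cases "(u, v) \<in> SA")
    case True
    then show ?thesis by (rule RB_embed_vertex_in_part)
  next
    case False
    have "column u \<noteq> column v" "column u < k" "column v < k" using column_other_part[OF uv False] column_spec uv by auto
    then have "(embed_vertex u, embed_vertex v) \<in> RB \<longleftrightarrow> (column_base (column u), column_base (column v)) \<in> RB"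
      using RB_columns embed_vertex_in_B uv by auto
    then show ?thesis using column_other_part[OF uv False] by simp
  qed
qed

end

lemma embedding_from_empty: "embedding f {} E R V' E' R'"
  unfolding embedding_def by simp

theorem theorem8p5:
  shows "expansion_property (K_omega :: nat set \<Rightarrow> _) K_omega_star"
  unfolding expansion_property_def
proof (intro allI impI)
  fix A :: "nat set" and EA assume K_omega_A: "K_omega A EA"
  show "\<exists>(B :: nat set) EB. K_omega B EB \<and> (\<forall>RA RB. K_omega_star A EA RA \<and> K_omega_star B EB RB \<longrightarrow>
           (\<exists>f. embedding f A EA RA B EB RB))"
  proof (cases "A = {}")
    case True
    then show ?thesis using K_omega_empty embedding_from_empty by blast
  next
    case False
    obtain N :: nat where ramsey_N:
        "partn_lst {..<N} (replicate (card (Pow A)) (homog_size (card A))) (4 * card A)"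
      using ramsey_full by blast
    interpret multipartite_code A EA N using K_omega_A by unfold_locales
    have "\<exists>f. embedding f A EA RA B EB RB"
      if "K_omega_star A EA RA" "K_omega_star B EB RB" for RA RB
    proof -
      interpret code_embedding A EA N RA RB
        by (rule code_embedding.intro[OF multipartite_code_axioms],
            rule code_embedding_axioms.intro[OF False ramsey_N that])
      show ?thesis using embedding_embed_vertex by blast
    qed
    then show ?thesis using K_omega_B by blast
  qed
qed

end
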